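(* Let $\mathbb{E}$ be a Euclidean space and let $\mathcal{X},\mathcal{Y}\subset\mathbb{E}$ be sets that are both $C^{(2)}$-manifolds around a point $z$, where $z$ is an isolated point of $\mathcal{X}\cap\mathcal{Y}$ and the intersection is transversal at $z$, i.e. $N_{\mathcal{X}}(z)\cap N_{\mathcal{Y}}(z)=\{0\}$. Then there is an open neighborhood $W$ of $z$ such that for each $x\in\mathcal{X}\cap W$ the affine set $x+T_{\mathcal{X}}(x)$ meets $\mathcal{Y}\cap W$ in exactly one point, denoted $y(x)$. Let $R\colon\mathcal{Y}\to\mathcal{X}$ be a Lipschitz map with $R(z)=z$. Then, starting from any point $x\in\mathcal{X}$ sufficiently near $z$, the iteration $$x\leftarrow R\big(y(x)\big)$$ converges quadratically to $z$.
   Context: A set $\mathcal{X}\subset\mathbb{E}$ is a $C^{(r)}$-manifold around $z\in\mathcal{X}$ if there is a $C^{(r)}$-smooth map $F\colon\mathbb{E}\to\mathbb{R}^m$ with surjective derivative $DF(z)$ such that $F^{-1}(0)$ is a neighborhood of $z$ in $\mathcal{X}$. The tangent space $T_{\mathcal{X}}(x)$ at points $x\in\mathcal{X}$ near $z$ is the null space of the derivative of such a defining map at $x$, and the normal space $N_{\mathcal{X}}(x)$ is its orthogonal complement. Quadratic convergence means the iterates are well defined, converge to $z$, and satisfy $|x_{\text{new}}-z|=O(|x-z|^2)$. *)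

theory Defs
  imports "HOL-Analysis.Analysis"
begin

definition C2_map :: "('a::euclidean_space \<Rightarrow> 'm::euclidean_space) \<Rightarrow> bool" where
  "C2_map F \<longleftrightarrow> (\<exists>(DF :: 'a \<Rightarrow> 'a \<Rightarrow>\<^sub>L 'm) (D2 :: 'a \<Rightarrow> 'a \<Rightarrow>\<^sub>L ('a \<Rightarrow>\<^sub>L 'm)).
      (\<forall>x. (F has_derivative blinfun_apply (DF x)) (at x)) \<and>
      (\<forall>x. (DF has_derivative blinfun_apply (D2 x)) (at x)) \<and>
      continuous_on UNIV D2)"

definition C2_defining_map ::
  "('a::euclidean_space \<Rightarrow> 'm::euclidean_space) \<Rightarrow> 'a set \<Rightarrow> 'a \<Rightarrow> bool" where
  "C2_defining_map F X z \<longleftrightarrow>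
     z \<in> X \<and> C2_map F \<and> surj (frechet_derivative F (at z)) \<and>
     F -` {0} \<subseteq> X \<and> (\<exists>U. open U \<and> z \<in> U \<and> X \<inter> U \<subseteq> F -` {0})"

definition tangent_space :: "('a::euclidean_space \<Rightarrow> 'm::euclidean_space) \<Rightarrow> 'a \<Rightarrow> 'a set" where
  "tangent_space F x = {v. frechet_derivative F (at x) v = 0}"

definition normal_space :: "('a::euclidean_space \<Rightarrow> 'm::euclidean_space) \<Rightarrow> 'a \<Rightarrow> 'a set" where
  "normal_space F x = orthogonal_comp (tangent_space F x)"

end

(*
  Near z, X and Y are the zero sets of F and G. Transversality makes the derivative
  v \<mapsto> (DF z v, DG z v) of (F, G) at z onto, and since z is isolated in X \<inter> Y it is also
  one-to-one: a kernel vector v would let the open mapping theorem, applied to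
  x \<mapsto> (F x, G x, v \<bullet> (x - z)), produce points of X \<inter> Y other than z arbitrarily close to z.
  Hence m |y1 - y2| \<le> |DF x (y1 - y2)| + |G y1 - G y2| for x, y1, y2 near z. A point y of Y on
  x + T_X(x) satisfies DF x (y - z) = F z - F x - DF x (z - x), so Taylor's formula gives
  |y - z| \<le> K |x - z|^2, and two such points coincide. Existence comes from the open mapping
  theorem for (x, y) \<mapsto> (x, DF x (y - x), G y) at (z, z). As R is Lipschitz and fixes z, the
  step x \<mapsto> R (y x) satisfies |R (y x) - z| \<le> L K |x - z|^2, which contracts by a factor 1/2
  within distance 1/(2 L K) of z.
*)

theory Submission
  imports Defs
begin

lemma square_le_linear_if_le:
  fixes C d r :: real
  assumes "0 \<le> C" "0 \<le> d" "d \<le> r"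
  shows "C * d\<^sup>2 \<le> C * r * d"
  using assms by (simp add: power2_eq_square mult_left_mono mult_right_mono mult.assoc)

lemma iterates_halve_dist:
  fixes T :: "'a::metric_space \<Rightarrow> 'a"
  assumes "0 \<le> C" "C * \<delta> \<le> 1 / 2"
    and step: "\<And>x. x \<in> S \<Longrightarrow> dist x z < \<delta> \<Longrightarrow> T x \<in> S \<and> dist (T x) z \<le> C * (dist x z)\<^sup>2"
    and "x0 \<in> S" "dist x0 z < \<delta>"
  shows "(T ^^ k) x0 \<in> S \<and> dist ((T ^^ k) x0) z \<le> (1 / 2) ^ k * dist x0 z"
proof (induction k)
  case 0
  then show ?case using \<open>x0 \<in> S\<close> by simp
next
  case (Suc k)
  let ?x = "(T ^^ k) x0"
  have "(1 / 2) ^ k * dist x0 z \<le> dist x0 z"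
    by (simp add: mult_left_le_one_le power_le_one)
  then have "dist ?x z < \<delta>"
    using Suc.IH \<open>dist x0 z < \<delta>\<close> by linarith
  then have "T ?x \<in> S" and "dist (T ?x) z \<le> C * (dist ?x z)\<^sup>2"
    using step[of ?x] Suc.IH by simp_all
  moreover have "C * (dist ?x z)\<^sup>2 \<le> C * \<delta> * dist ?x z"
    using \<open>0 \<le> C\<close> \<open>dist ?x z < \<delta>\<close> by (intro square_le_linear_if_le) simp_all
  moreover have "C * \<delta> * dist ?x z \<le> 1 / 2 * dist ?x z"
    using mult_right_mono[OF \<open>C * \<delta> \<le> 1 / 2\<close> zero_le_dist] .
  ultimately have "dist (T ?x) z \<le> 1 / 2 * dist ?x z"
    by linarith
  also have "\<dots> \<le> 1 / 2 * ((1 / 2) ^ k * dist x0 z)"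
    using Suc.IH by simp
  finally show ?case
    using \<open>T ?x \<in> S\<close> by simp
qed

lemma quadratic_convergence_of_iterates:
  fixes T :: "'a::metric_space \<Rightarrow> 'a"
  assumes "0 \<le> C" "0 < \<rho>"
    and step: "\<And>x. x \<in> S \<Longrightarrow> x \<in> ball z \<rho> \<Longrightarrow> T x \<in> S \<and> dist (T x) z \<le> C * (dist x z)\<^sup>2"
  obtains \<delta> where "0 < \<delta>"
    "\<And>x0 k. x0 \<in> S \<inter> ball z \<delta> \<Longrightarrow> (T ^^ k) x0 \<in> S \<inter> ball z \<rho>"
    "\<And>x0. x0 \<in> S \<inter> ball z \<delta> \<Longrightarrow> (\<lambda>k. (T ^^ k) x0) \<longlonglongrightarrow> z"
proof -
  define \<delta> where "\<delta> = min \<rho> (1 / (2 * C + 1))"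
  have "0 < \<delta>" "\<delta> \<le> \<rho>"
    using \<open>0 \<le> C\<close> \<open>0 < \<rho>\<close> by (simp_all add: \<delta>_def)
  have "C * \<delta> \<le> 1 / 2"
  proof -
    have "\<delta> \<le> 1 / (2 * C + 1)"
      by (simp add: \<delta>_def)
    then have "(2 * C + 1) * \<delta> \<le> 1"
      using \<open>0 \<le> C\<close> by (simp add: field_simps)
    then show ?thesis
      using \<open>0 < \<delta>\<close> by (simp add: algebra_simps)
  qed
  have halving: "(T ^^ k) x0 \<in> S \<and> dist ((T ^^ k) x0) z \<le> (1 / 2) ^ k * dist x0 z"
    if "x0 \<in> S \<inter> ball z \<delta>" for x0 k
    using that step \<open>\<delta> \<le> \<rho>\<close>
    by (intro iterates_halve_dist[OF \<open>0 \<le> C\<close> \<open>C * \<delta> \<le> 1 / 2\<close>]) (auto simp: dist_commute)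
  show thesis
  proof (rule that[OF \<open>0 < \<delta>\<close>])
    fix x0 k assume x0: "x0 \<in> S \<inter> ball z \<delta>"
    have "(1 / 2) ^ k * dist x0 z \<le> dist x0 z"
      by (simp add: mult_left_le_one_le power_le_one)
    then show "(T ^^ k) x0 \<in> S \<inter> ball z \<rho>"
      using halving[OF x0, of k] x0 \<open>\<delta> \<le> \<rho>\<close> by (auto simp: dist_commute)
  next
    fix x0 assume x0: "x0 \<in> S \<inter> ball z \<delta>"
    have "(\<lambda>k. (1 / 2) ^ k * dist x0 z) \<longlonglongrightarrow> 0"
      by (intro tendsto_mult_left_zero LIMSEQ_power_zero) simp
    then have "(\<lambda>k. dist ((T ^^ k) x0) z) \<longlonglongrightarrow> 0"
      by (rule Lim_null_comparison[rotated]) (use halving[OF x0] in \<open>auto intro: always_eventually\<close>)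
    then show "(\<lambda>k. (T ^^ k) x0) \<longlonglongrightarrow> z"
      using tendsto_dist_iff by blast
  qed
qed

lemma ex1_near_if_quadratic_bound:
  fixes P :: "'a::metric_space \<Rightarrow> 'a \<Rightarrow> bool"
  assumes "0 \<le> K" "0 < r0" "0 < \<eta>"
    and exists: "\<And>x. x \<in> ball z \<eta> \<Longrightarrow> \<exists>y \<in> ball z r0. P x y"
    and quadratic: "\<And>x y. x \<in> S \<inter> ball z r0 \<Longrightarrow> y \<in> ball z r0 \<Longrightarrow> P x y \<Longrightarrow> dist y z \<le> K * (dist x z)\<^sup>2"
    and unique: "\<And>x y1 y2. x \<in> ball z r0 \<Longrightarrow> y1 \<in> ball z r0 \<Longrightarrow> y2 \<in> ball z r0 \<Longrightarrow>
      P x y1 \<Longrightarrow> P x y2 \<Longrightarrow> y1 = y2"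
  obtains r where "0 < r" "r \<le> r0" "\<And>x. x \<in> S \<inter> ball z r \<Longrightarrow> \<exists>!y. y \<in> ball z r \<and> P x y"
proof -
  \<comment> \<open>\<open>K * r \<le> 1\<close> makes the quadratic bound keep the solution inside \<open>ball z r\<close>.\<close>
  define r where "r = min (min r0 \<eta>) (1 / (K + 1))"
  have "0 < r" "r \<le> r0" "r \<le> \<eta>"
    using \<open>0 < r0\<close> \<open>0 < \<eta>\<close> \<open>0 \<le> K\<close> by (simp_all add: r_def)
  have "K * r \<le> 1"
  proof -
    have "r \<le> 1 / (K + 1)"
      by (simp add: r_def)
    then have "(K + 1) * r \<le> 1"
      using \<open>0 \<le> K\<close> by (simp add: field_simps)
    then show ?thesis
      using \<open>0 < r\<close> by (simp add: algebra_simps)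
  qed
  show thesis
  proof (rule that[OF \<open>0 < r\<close> \<open>r \<le> r0\<close>])
    fix x assume x: "x \<in> S \<inter> ball z r"
    obtain y where y: "y \<in> ball z r0" "P x y"
      using exists[of x] x \<open>r \<le> \<eta>\<close> by auto
    have "dist y z \<le> K * (dist x z)\<^sup>2"
      using quadratic[of x y] x y \<open>r \<le> r0\<close> by auto
    also have "\<dots> \<le> K * r * dist x z"
      using x \<open>0 \<le> K\<close> by (intro square_le_linear_if_le) (auto simp: dist_commute)
    also have "\<dots> \<le> dist x z"
      using mult_right_mono[OF \<open>K * r \<le> 1\<close> zero_le_dist] by simp
    finally have "y \<in> ball z r"
      using x by (simp add: dist_commute)
    with y show "\<exists>!y. y \<in> ball z r \<and> P x y"
      using unique[of x] x \<open>r \<le> r0\<close> by (intro ex1I[of _ y]) auto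
  qed
qed

lemma lipschitz_on_if_continuous_derivative:
  fixes f :: "'a::real_normed_vector \<Rightarrow> 'b::real_normed_vector" and f' :: "'a \<Rightarrow> 'a \<Rightarrow>\<^sub>L 'b"
  assumes "compact S" "convex S"
    and f': "\<And>x. x \<in> S \<Longrightarrow> (f has_derivative f' x) (at x)"
    and "continuous_on S f'"
  obtains B where "B-lipschitz_on S f"
proof -
  obtain B where B: "\<And>x. x \<in> S \<Longrightarrow> norm (f' x) \<le> B"
    using compact_imp_bounded[OF compact_continuous_image[OF assms(4,1)]]
    by (auto simp: bounded_iff)
  have "(max B 0)-lipschitz_on S f"
  proof (rule bounded_derivative_imp_lipschitz[OF has_derivative_at_withinI[OF f'] \<open>convex S\<close>])
    show "onorm (f' x) \<le> max B 0" if "x \<in> S" for x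
      using B[OF that] by (simp add: norm_blinfun.rep_eq[symmetric])
  qed auto
  then show thesis ..
qed

lemma norm_linearization_error_le:
  fixes f :: "'a::real_normed_vector \<Rightarrow> 'b::real_normed_vector" and f' :: "'a \<Rightarrow> 'a \<Rightarrow>\<^sub>L 'b"
  assumes "convex S"
    and f': "\<And>x. x \<in> S \<Longrightarrow> (f has_derivative f' x) (at x)"
    and lip: "B-lipschitz_on S f'"
    and "c \<in> S" "a \<in> S" "b \<in> S" "S \<subseteq> cball c r"
  shows "norm (f b - f a - f' c (b - a)) \<le> B * r * norm (b - a)"
proof -
  have "norm (f b - f a - f' c (b - a)) \<le> norm (b - a) * (B * r)"
  proof (rule differentiable_bound_linearization[OF _ has_derivative_at_withinI[OF f']])
    show "a + t *\<^sub>R (b - a) \<in> S" if "t \<in> {0..1}" for t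
      using convexD_alt[OF \<open>convex S\<close> \<open>a \<in> S\<close> \<open>b \<in> S\<close>, of t] that
      by (simp add: algebra_simps)
    show "onorm (blinfun_apply (f' x) - blinfun_apply (f' c)) \<le> B * r" if "x \<in> S" for x
    proof -
      have "onorm (blinfun_apply (f' x) - blinfun_apply (f' c)) = dist (f' x) (f' c)"
        by (simp add: dist_norm norm_blinfun.rep_eq minus_blinfun.rep_eq fun_diff_def)
      also have "\<dots> \<le> B * dist x c"
        using lipschitz_onD[OF lip that \<open>c \<in> S\<close>] .
      also have "\<dots> \<le> B * r"
        using \<open>S \<subseteq> cball c r\<close> that lipschitz_on_nonneg[OF lip]
        by (auto intro!: mult_left_mono simp: dist_commute)
      finally show ?thesis .
    qed
  qed (use \<open>c \<in> S\<close> in auto)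
  then show ?thesis by (simp add: mult_ac)
qed

lemma norm_taylor_remainder_le:
  fixes f :: "'a::real_normed_vector \<Rightarrow> 'b::real_normed_vector" and f' :: "'a \<Rightarrow> 'a \<Rightarrow>\<^sub>L 'b"
  assumes "convex S"
    and f': "\<And>x. x \<in> S \<Longrightarrow> (f has_derivative f' x) (at x)"
    and lip: "B-lipschitz_on S f'"
    and "a \<in> S" "b \<in> S"
  shows "norm (f b - f a - f' a (b - a)) \<le> B * (norm (b - a))\<^sup>2"
proof -
  have seg: "closed_segment a b \<subseteq> S"
    using \<open>convex S\<close> \<open>a \<in> S\<close> \<open>b \<in> S\<close> by (simp add: closed_segment_subset)
  have "norm (f b - f a - f' a (b - a)) \<le> B * norm (b - a) * norm (b - a)"
  proof (rule norm_linearization_error_le[where S="closed_segment a b"])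
    show "B-lipschitz_on (closed_segment a b) f'"
      using lipschitz_on_subset[OF lip seg] .
    show "closed_segment a b \<subseteq> cball a (norm (b - a))"
    proof
      fix x assume "x \<in> closed_segment a b"
      then have "norm (x - a) \<le> norm (b - a)" by (rule segment_bound1)
      then show "x \<in> cball a (norm (b - a))" by (simp add: dist_norm norm_minus_commute)
    qed
  qed (use seg f' in auto)
  then show ?thesis by (simp add: power2_eq_square mult_ac)
qed

lemma ball_subset_image_ball_if_surj_derivative:
  fixes f :: "'a::euclidean_space \<Rightarrow> 'b::euclidean_space"
  assumes "continuous_on UNIV f" "(f has_derivative f') (at x)" "surj f'" "0 < e"
  obtains \<eta> where "0 < \<eta>" "ball (f x) \<eta> \<subseteq> f ` ball x e"
proof -
  have "linear f'"
    using assms(2) has_derivative_linear by blast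
  then obtain g where "linear g" "f' \<circ> g = id"
    using linear_surjective_right_inverse[OF _ \<open>surj f'\<close>] by blast
  then have "f x \<in> interior (f ` ball x e)"
    using assms by (intro sussmann_open_mapping[where S=UNIV and g'=g])
      (auto simp: linear_conv_bounded_linear)
  then show thesis
    using that by (meson interior_subset mem_interior order_trans)
qed

lemma inj_derivative_if_isolated_in_fibre:
  fixes f :: "'a::euclidean_space \<Rightarrow> 'b::euclidean_space"
  assumes cont: "continuous_on UNIV f" and der: "(f has_derivative f') (at z)" and "surj f'"
    and "0 < e" and isolated: "\<And>x. x \<in> ball z e \<Longrightarrow> f x = f z \<Longrightarrow> x = z"
  shows "inj f'"
proof (rule ccontr)
  assume "\<not> inj f'"
  then obtain v where v: "f' v = 0" "v \<noteq> 0"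
    using linear_injective_0[OF has_derivative_linear[OF der]] by auto
  define \<Phi> where "\<Phi> x = (f x, v \<bullet> (x - z))" for x
  have der\<Phi>: "(\<Phi> has_derivative (\<lambda>h. (f' h, v \<bullet> h))) (at z)"
    unfolding \<Phi>_def by (auto intro!: derivative_eq_intros der)
  have "surj (\<lambda>h. (f' h, v \<bullet> h))"
  proof -
    have "(b, t) \<in> range (\<lambda>h. (f' h, v \<bullet> h))" for b t
    proof -
      obtain h0 where "f' h0 = b"
        using \<open>surj f'\<close> by (metis surjD)
      moreover define c where "c = (t - v \<bullet> h0) / (v \<bullet> v)"
      ultimately have "(b, t) = (f' (h0 + c *\<^sub>R v), v \<bullet> (h0 + c *\<^sub>R v))"
        using v linear_add[OF has_derivative_linear[OF der]] linear_scale[OF has_derivative_linear[OF der]]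
        by (simp add: inner_add_right)
      then show ?thesis by blast
    qed
    then show ?thesis by auto
  qed
  moreover have "continuous_on UNIV \<Phi>"
    unfolding \<Phi>_def by (intro continuous_intros cont)
  ultimately obtain \<eta> where "0 < \<eta>" "ball (\<Phi> z) \<eta> \<subseteq> \<Phi> ` ball z e"
    using ball_subset_image_ball_if_surj_derivative[OF _ der\<Phi> _ \<open>0 < e\<close>] by blast
  moreover have "(f z, \<eta> / 2) \<in> ball (\<Phi> z) \<eta>"
    using \<open>0 < \<eta>\<close> by (simp add: \<Phi>_def dist_norm)
  ultimately obtain x where "x \<in> ball z e" "f x = f z" "v \<bullet> (x - z) = \<eta> / 2"
    by (force simp: \<Phi>_def)
  with isolated \<open>0 < \<eta>\<close> show False
    by force
qed

lemma orthogonal_comp_kernel_eq_range_adjoint: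
  fixes f :: "'a::euclidean_space \<Rightarrow> 'b::euclidean_space"
  assumes "linear f"
  shows "orthogonal_comp {v. f v = 0} = range (adjoint f)"
proof -
  have "{v. f v = 0} = orthogonal_comp (range (adjoint f))"
    using ker_orthogonal_comp_adjoint[OF assms] by (simp add: vimage_def)
  then show ?thesis
    using assms by (simp add: orthogonal_comp_self adjoint_linear linear_subspace_image subspace_UNIV)
qed

lemma surj_pair_if_transversal_kernels:
  fixes f :: "'a::euclidean_space \<Rightarrow> 'm::euclidean_space" and g :: "'a \<Rightarrow> 'n::euclidean_space"
  assumes "linear f" "linear g" "surj f" "surj g"
    and transv: "orthogonal_comp {v. f v = 0} \<inter> orthogonal_comp {v. g v = 0} = {0}"
  shows "surj (\<lambda>v. (f v, g v))"
proof -
  let ?M = "\<lambda>v. (f v, g v)"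
  have "linear ?M"
    using assms(1,2) by (simp add: linear_iff)
  have adjoint_M: "adjoint ?M = (\<lambda>(p, q). adjoint f p + adjoint g q)"
    by (rule adjoint_unique)
      (auto simp: inner_Pair inner_add_right adjoint_works[OF assms(1)] adjoint_works[OF assms(2)])
  \<comment> \<open>A kernel vector \<open>(p, q)\<close> of the adjoint gives \<open>adjoint f p = - adjoint g q\<close> in both normal spaces.\<close>
  have "inj (adjoint ?M)"
    unfolding linear_injective_0[OF adjoint_linear[OF \<open>linear ?M\<close>]]
  proof (intro allI impI)
    fix w assume "adjoint ?M w = 0"
    then obtain p q where w: "w = (p, q)" and sum0: "adjoint f p + adjoint g q = 0"
      by (cases w) (simp add: adjoint_M)
    have "adjoint f p = adjoint g (- q)"
      using sum0 by (simp add: eq_neg_iff_add_eq_0 linear_neg[OF adjoint_linear[OF assms(2)]])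
    then have "adjoint f p \<in> range (adjoint f) \<inter> range (adjoint g)"
      by (metis IntI rangeI)
    moreover have "range (adjoint f) \<inter> range (adjoint g) = {0}"
      using transv assms(1,2) by (simp add: orthogonal_comp_kernel_eq_range_adjoint)
    ultimately have "adjoint f p = 0"
      by blast
    moreover from this have "adjoint g q = 0"
      using sum0 by simp
    moreover have "inj (adjoint f)" "inj (adjoint g)"
      using assms by simp_all
    ultimately have "p = 0" "q = 0"
      using assms(1,2) by (simp_all add: adjoint_linear linear_inj_iff_eq_0)
    then show "w = 0"
      by (simp add: w zero_prod_def)
  qed
  then show ?thesis
    using \<open>linear ?M\<close> by simp
qed

lemma bij_pair_derivative_if_transversal_isolated:
  fixes F :: "'a::euclidean_space \<Rightarrow> 'm::euclidean_space" and DF :: "'a \<Rightarrow> 'a \<Rightarrow>\<^sub>L 'm"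
    and G :: "'a \<Rightarrow> 'n::euclidean_space" and DG :: "'a \<Rightarrow> 'a \<Rightarrow>\<^sub>L 'n"
  assumes dF: "\<And>x. (F has_derivative DF x) (at x)" and dG: "\<And>x. (G has_derivative DG x) (at x)"
    and "surj (DF z)" "surj (DG z)"
    and transv: "orthogonal_comp {v. DF z v = 0} \<inter> orthogonal_comp {v. DG z v = 0} = {0}"
    and "0 < e" and isolated: "\<And>x. x \<in> ball z e \<Longrightarrow> F x = F z \<Longrightarrow> G x = G z \<Longrightarrow> x = z"
  shows "bij (\<lambda>v. (DF z v, DG z v))"
proof -
  have surj: "surj (\<lambda>v. (DF z v, DG z v))"
    using transv \<open>surj (DF z)\<close> \<open>surj (DG z)\<close>
    by (intro surj_pair_if_transversal_kernels bounded_linear.linear blinfun.bounded_linear_right)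
  have "inj (\<lambda>v. (DF z v, DG z v))"
  proof (rule inj_derivative_if_isolated_in_fibre[where f="\<lambda>x. (F x, G x)"])
    show "continuous_on UNIV (\<lambda>x. (F x, G x))"
      using has_derivative_continuous[OF dF] has_derivative_continuous[OF dG]
      by (intro continuous_on_Pair continuous_at_imp_continuous_on) auto
    show "((\<lambda>x. (F x, G x)) has_derivative (\<lambda>v. (DF z v, DG z v))) (at z)"
      by (intro has_derivative_Pair dF dG)
  qed (use surj \<open>0 < e\<close> isolated in auto)
  with surj show ?thesis
    by (simp add: bij_def)
qed

lemma norm_blinfun_apply_diff_le_lipschitz:
  fixes A :: "'a::metric_space \<Rightarrow> 'b::real_normed_vector \<Rightarrow>\<^sub>L 'c::real_normed_vector"
  assumes "B-lipschitz_on S A" "x \<in> S" "y \<in> S"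
  shows "norm (A x v - A y v) \<le> B * dist x y * norm v"
proof -
  have "norm (A x v - A y v) \<le> dist (A x) (A y) * norm v"
    using norm_blinfun[of "A x - A y" v] by (simp add: dist_norm blinfun.diff_left)
  also have "\<dots> \<le> B * dist x y * norm v"
    using lipschitz_onD[OF assms] by (simp add: mult_right_mono)
  finally show ?thesis .
qed

lemma pair_bounded_below_near:
  fixes A :: "'a::euclidean_space \<Rightarrow> 'a \<Rightarrow>\<^sub>L 'm::euclidean_space"
    and G :: "'a \<Rightarrow> 'n::euclidean_space" and DG :: "'a \<Rightarrow> 'a \<Rightarrow>\<^sub>L 'n"
  assumes dG: "\<And>x. (G has_derivative DG x) (at x)"
    and lipA: "BA-lipschitz_on (cball z \<rho>) A" and lipG: "BG-lipschitz_on (cball z \<rho>) DG"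
    and inj: "inj (\<lambda>v. (A z v, DG z v))" and "0 < \<rho>"
  obtains r m where "0 < r" "r \<le> \<rho>" "0 < m"
    "\<And>x y1 y2. x \<in> ball z r \<Longrightarrow> y1 \<in> ball z r \<Longrightarrow> y2 \<in> ball z r \<Longrightarrow>
       m * norm (y1 - y2) \<le> norm (A x (y1 - y2)) + norm (G y1 - G y2)"
proof -
  have "linear (\<lambda>v. (A z v, DG z v))"
    by (intro bounded_linear.linear bounded_linear_Pair blinfun.bounded_linear_right)
  then obtain m0 where "0 < m0" and m0: "\<And>v. m0 * norm v \<le> norm (A z v, DG z v)"
    using linear_inj_bounded_below_pos[OF _ inj] by blast
  have "0 \<le> BA" "0 \<le> BG"
    using lipA lipG by (simp_all add: lipschitz_on_nonneg)
  define r where "r = min \<rho> (m0 / (2 * (BA + BG + 1)))"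
  have "0 < r" "r \<le> \<rho>"
    using \<open>0 < \<rho>\<close> \<open>0 < m0\<close> \<open>0 \<le> BA\<close> \<open>0 \<le> BG\<close> by (auto simp: r_def)
  have small: "(BA + BG) * r \<le> m0 / 2"
  proof -
    have "r \<le> m0 / (2 * (BA + BG + 1))"
      by (simp add: r_def)
    then have "(BA + BG + 1) * r \<le> m0 / 2"
      using \<open>0 \<le> BA\<close> \<open>0 \<le> BG\<close> by (simp add: field_simps)
    then show ?thesis
      using \<open>0 < r\<close> by (simp add: algebra_simps)
  qed
  have "m0 / 2 * norm (y1 - y2) \<le> norm (A x (y1 - y2)) + norm (G y1 - G y2)"
    if x: "x \<in> ball z r" and y: "y1 \<in> ball z r" "y2 \<in> ball z r" for x y1 y2
  proof -
    define v where "v = y1 - y2"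
    have ball_sub: "ball z r \<subseteq> cball z \<rho>"
      using \<open>r \<le> \<rho>\<close> by auto
    have "norm (A z v - A x v) \<le> BA * dist z x * norm v"
      using norm_blinfun_apply_diff_le_lipschitz[OF lipA, of z x v] x \<open>0 < r\<close> \<open>r \<le> \<rho>\<close> by simp
    also have "\<dots> \<le> BA * r * norm v"
      using x \<open>0 \<le> BA\<close> by (intro mult_right_mono mult_left_mono) auto
    finally have "norm (A z v - A x v) \<le> BA * r * norm v" .
    moreover have "norm (G y1 - G y2 - DG z v) \<le> BG * r * norm v"
      unfolding v_def
      by (rule norm_linearization_error_le[where S="ball z r"])
        (use dG \<open>0 < r\<close> y lipschitz_on_subset[OF lipG ball_sub] in auto)
    moreover have "m0 * norm v \<le> norm (A z v) + norm (DG z v)"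
      using m0[of v] norm_Pair_le[of "A z v" "DG z v"] by linarith
    moreover have "BA * r * norm v + BG * r * norm v \<le> m0 / 2 * norm v"
      using mult_right_mono[OF small norm_ge_zero[of v]] by (simp add: algebra_simps)
    moreover have "norm (A z v) \<le> norm (A x v) + norm (A z v - A x v)"
      by (rule norm_triangle_sub)
    moreover have "norm (DG z v) \<le> norm (G y1 - G y2) + norm (G y1 - G y2 - DG z v)"
      using norm_triangle_sub[of "DG z v" "G y1 - G y2"] by (simp add: norm_minus_commute)
    ultimately show ?thesis
      unfolding v_def[symmetric] by linarith
  qed
  with \<open>0 < r\<close> \<open>r \<le> \<rho>\<close> \<open>0 < m0\<close> show thesis
    by (intro that[of r "m0 / 2"]) auto
qed

lemma exists_zero_on_kernel_coset_near:
  fixes A :: "'a::euclidean_space \<Rightarrow> 'a \<Rightarrow>\<^sub>L 'm::euclidean_space"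
    and DA :: "'a \<Rightarrow> 'a \<Rightarrow> 'a \<Rightarrow>\<^sub>L 'm"
    and G :: "'a \<Rightarrow> 'n::euclidean_space" and DG :: "'a \<Rightarrow> 'a \<Rightarrow>\<^sub>L 'n"
  assumes dA: "\<And>x. (A has_derivative DA x) (at x)" and dG: "\<And>x. (G has_derivative DG x) (at x)"
    and "G z = 0" and surj: "surj (\<lambda>v. (A z v, DG z v))" and "0 < r"
  obtains \<eta> where "0 < \<eta>" "\<And>x. x \<in> ball z \<eta> \<Longrightarrow> \<exists>y \<in> ball z r. A x (y - x) = 0 \<and> G y = 0"
proof -
  define H where "H p = (fst p, A (fst p) (snd p - fst p), G (snd p))" for p :: "'a \<times> 'a"
  have dH: "(H has_derivative (\<lambda>h. (fst h, A (fst p) (snd h - fst h) + DA (fst p) (fst h) (snd p - fst p),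
      DG (snd p) (snd h)))) (at p)" for p
  proof -
    have dA_fst: "((\<lambda>p. A (fst p)) has_derivative (\<lambda>h. DA (fst p) (fst h))) (at p)"
      by (rule has_derivative_compose[OF has_derivative_fst[OF has_derivative_ident] dA])
    have dG_snd: "((\<lambda>p. G (snd p)) has_derivative (\<lambda>h. DG (snd p) (snd h))) (at p)"
      by (rule has_derivative_compose[OF has_derivative_snd[OF has_derivative_ident] dG])
    show ?thesis
      unfolding H_def by (auto intro!: derivative_eq_intros dA_fst dG_snd)
  qed
  have dH_z: "(H has_derivative (\<lambda>h. (fst h, A z (snd h - fst h), DG z (snd h)))) (at (z, z))"
    using dH[of "(z, z)"] by simp
  have "surj (\<lambda>h. (fst h, A z (snd h - fst h), DG z (snd h)))"
    unfolding surj_def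
  proof
    fix w :: "'a \<times> 'm \<times> 'n"
    obtain a b c where w: "w = (a, b, c)"
      by (cases w)
    obtain h where "(b + A z a, c) = (A z h, DG z h)"
      using surjD[OF surj, of "(b + A z a, c)"] by blast
    then have "A z (h - a) = b" "DG z h = c"
      by (auto simp: blinfun.diff_right diff_eq_eq)
    then show "\<exists>h. w = (fst h, A z (snd h - fst h), DG z (snd h))"
      by (intro exI[of _ "(a, h)"]) (simp add: w)
  qed
  moreover have "continuous_on UNIV H"
    using dH by (meson continuous_at_imp_continuous_on has_derivative_continuous)
  ultimately obtain \<eta> where "0 < \<eta>" and \<eta>: "ball (H (z, z)) \<eta> \<subseteq> H ` ball (z, z) r"
    using ball_subset_image_ball_if_surj_derivative[OF _ dH_z _ \<open>0 < r\<close>] by blast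
  have "\<exists>y \<in> ball z r. A x (y - x) = 0 \<and> G y = 0" if "x \<in> ball z \<eta>" for x
  proof -
    have "(x, 0, 0) \<in> ball (H (z, z)) \<eta>"
      using that \<open>G z = 0\<close> by (simp add: H_def dist_Pair_Pair dist_commute)
    then obtain p where p: "p \<in> ball (z, z) r" "(x, 0, 0) = H p"
      using \<eta> by blast
    then have "snd p \<in> ball z r"
      using dist_snd_le[of "(z, z)" p] by simp
    with p show ?thesis
      by (auto simp: H_def)
  qed
  with \<open>0 < \<eta>\<close> show thesis
    using that by blast
qed

lemma unique_zero_on_kernel_coset_near:
  fixes F :: "'a::euclidean_space \<Rightarrow> 'm::euclidean_space" and DF :: "'a \<Rightarrow> 'a \<Rightarrow>\<^sub>L 'm"
    and D2F :: "'a \<Rightarrow> 'a \<Rightarrow> 'a \<Rightarrow>\<^sub>L 'm"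
    and G :: "'a \<Rightarrow> 'n::euclidean_space" and DG :: "'a \<Rightarrow> 'a \<Rightarrow>\<^sub>L 'n"
  assumes dF: "\<And>x. (F has_derivative DF x) (at x)" and dDF: "\<And>x. (DF has_derivative D2F x) (at x)"
    and dG: "\<And>x. (G has_derivative DG x) (at x)"
    and lipF: "BF-lipschitz_on (cball z \<rho>) DF" and lipG: "BG-lipschitz_on (cball z \<rho>) DG"
    and "0 < \<rho>" and "F z = 0" "G z = 0" and bij: "bij (\<lambda>v. (DF z v, DG z v))"
  obtains r K where "0 < r" "r \<le> \<rho>" "0 \<le> K"
    "\<And>x. x \<in> ball z r \<Longrightarrow> F x = 0 \<Longrightarrow> \<exists>!y. y \<in> ball z r \<and> DF x (y - x) = 0 \<and> G y = 0"
    "\<And>x y. x \<in> ball z r \<Longrightarrow> y \<in> ball z r \<Longrightarrow> F x = 0 \<Longrightarrow> DF x (y - x) = 0 \<Longrightarrow> G y = 0 \<Longrightarrow>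
       dist y z \<le> K * (dist x z)\<^sup>2"
proof -
  obtain r0 m where "0 < r0" "r0 \<le> \<rho>" "0 < m" and lower:
    "\<And>x y1 y2. x \<in> ball z r0 \<Longrightarrow> y1 \<in> ball z r0 \<Longrightarrow> y2 \<in> ball z r0 \<Longrightarrow>
       m * norm (y1 - y2) \<le> norm (DF x (y1 - y2)) + norm (G y1 - G y2)"
    using pair_bounded_below_near[OF dG lipF lipG bij_is_inj[OF bij] \<open>0 < \<rho>\<close>] by blast
  define K where "K = BF / m"
  have "0 \<le> K"
    using lipschitz_on_nonneg[OF lipF] \<open>0 < m\<close> by (simp add: K_def)
  have quadratic: "dist y z \<le> K * (dist x z)\<^sup>2"
    if x: "x \<in> {x. F x = 0} \<inter> ball z r0" and y: "y \<in> ball z r0" "DF x (y - x) = 0 \<and> G y = 0" for x y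
  proof -
    have "DF x (y - z) = DF x (y - x) - DF x (z - x)"
      by (simp add: blinfun.diff_right[symmetric])
    then have "m * norm (y - z) \<le> norm (F z - F x - DF x (z - x))"
      using lower[of x y z] \<open>0 < r0\<close> x y \<open>F z = 0\<close> \<open>G z = 0\<close> by simp
    also have "\<dots> \<le> BF * (norm (x - z))\<^sup>2"
      using norm_taylor_remainder_le[OF convex_cball dF lipF, of x z] x \<open>r0 \<le> \<rho>\<close> \<open>0 < \<rho>\<close>
      by (simp add: norm_minus_commute)
    finally show ?thesis
      using \<open>0 < m\<close> by (simp add: K_def field_simps dist_norm)
  qed
  have unique: "y1 = y2"
    if "x \<in> ball z r0" "y1 \<in> ball z r0" "y2 \<in> ball z r0"
      "DF x (y1 - x) = 0 \<and> G y1 = 0" "DF x (y2 - x) = 0 \<and> G y2 = 0" for x y1 y2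
  proof -
    have "DF x (y1 - y2) = DF x (y1 - x) - DF x (y2 - x)"
      by (simp add: blinfun.diff_right[symmetric])
    then have "m * norm (y1 - y2) \<le> 0"
      using lower[of x y1 y2] that by simp
    then show ?thesis
      using \<open>0 < m\<close> by (simp add: mult_le_0_iff)
  qed
  obtain \<eta> where "0 < \<eta>"
    and exists: "\<And>x. x \<in> ball z \<eta> \<Longrightarrow> \<exists>y \<in> ball z r0. DF x (y - x) = 0 \<and> G y = 0"
    using exists_zero_on_kernel_coset_near[OF dDF dG \<open>G z = 0\<close> bij_is_surj[OF bij] \<open>0 < r0\<close>] by blast
  obtain r where "0 < r" "r \<le> r0"
    and "\<And>x. x \<in> {x. F x = 0} \<inter> ball z r \<Longrightarrow> \<exists>!y. y \<in> ball z r \<and> DF x (y - x) = 0 \<and> G y = 0"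
    using ex1_near_if_quadratic_bound[of K r0 \<eta> z "\<lambda>x y. DF x (y - x) = 0 \<and> G y = 0" "{x. F x = 0}"]
      \<open>0 \<le> K\<close> \<open>0 < r0\<close> \<open>0 < \<eta>\<close> exists quadratic unique
    by blast
  with quadratic \<open>r0 \<le> \<rho>\<close> \<open>0 \<le> K\<close> show thesis
    using that[of r K] by auto
qed

lemma C2_defining_mapE:
  fixes F :: "'a::euclidean_space \<Rightarrow> 'm::euclidean_space"
  assumes "C2_defining_map F X z"
  obtains DF :: "'a \<Rightarrow> 'a \<Rightarrow>\<^sub>L 'm" and D2F :: "'a \<Rightarrow> 'a \<Rightarrow>\<^sub>L 'a \<Rightarrow>\<^sub>L 'm" and U
  where "\<And>x. (F has_derivative DF x) (at x)" "\<And>x. (DF has_derivative D2F x) (at x)"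
    "\<And>c r. \<exists>B. B-lipschitz_on (cball c r) DF" "surj (DF z)" "F z = 0"
    "open U" "z \<in> U" "\<And>x. x \<in> U \<Longrightarrow> x \<in> X \<longleftrightarrow> F x = 0"
    "\<And>x. tangent_space F x = {v. DF x v = 0}"
proof -
  obtain DF :: "'a \<Rightarrow> 'a \<Rightarrow>\<^sub>L 'm" and D2F :: "'a \<Rightarrow> 'a \<Rightarrow>\<^sub>L 'a \<Rightarrow>\<^sub>L 'm" where
    dF: "\<And>x. (F has_derivative DF x) (at x)" and dDF: "\<And>x. (DF has_derivative D2F x) (at x)"
    and "continuous_on UNIV D2F"
    using assms unfolding C2_defining_map_def C2_map_def by blast
  then have "\<exists>B. B-lipschitz_on (cball c r) DF" for c r
    using lipschitz_on_if_continuous_derivative[OF compact_cball convex_cball dDF]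
      continuous_on_subset by blast
  moreover have frechet: "frechet_derivative F (at x) = DF x" for x
    using frechet_derivative_at[OF dF] by simp
  moreover obtain U where "open U" "z \<in> U" "X \<inter> U \<subseteq> F -` {0}"
    using assms unfolding C2_defining_map_def by blast
  moreover have "z \<in> X" "surj (DF z)" "F -` {0} \<subseteq> X"
    using assms unfolding C2_defining_map_def frechet by auto
  ultimately show thesis
  proof (intro that[OF dF dDF])
    show "x \<in> X \<longleftrightarrow> F x = 0" if "x \<in> U" for x
      using that \<open>X \<inter> U \<subseteq> F -` {0}\<close> \<open>F -` {0} \<subseteq> X\<close> by blast
    show "F z = 0"
      using \<open>z \<in> X\<close> \<open>z \<in> U\<close> \<open>X \<inter> U \<subseteq> F -` {0}\<close> by blast
  qed (simp_all add: tangent_space_def frechet)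
qed

lemma transversal_manifold_meets_tangent_translate_once:
  fixes X Y :: "'a::euclidean_space set"
    and F :: "'a \<Rightarrow> 'm::euclidean_space" and G :: "'a \<Rightarrow> 'n::euclidean_space"
  assumes manX: "C2_defining_map F X z" and manY: "C2_defining_map G Y z"
    and isol: "\<exists>e>0. X \<inter> Y \<inter> ball z e = {z}"
    and transv: "normal_space F z \<inter> normal_space G z = {0}"
  obtains r K where "0 < r" "0 \<le> K"
    "\<And>x. x \<in> X \<inter> ball z r \<Longrightarrow> \<exists>!y. y \<in> Y \<inter> ball z r \<and> y \<in> (\<lambda>v. x + v) ` tangent_space F x"
    "\<And>x y. x \<in> X \<inter> ball z r \<Longrightarrow> y \<in> Y \<inter> ball z r \<Longrightarrow> y \<in> (\<lambda>v. x + v) ` tangent_space F x \<Longrightarrow>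
       dist y z \<le> K * (dist x z)\<^sup>2"
proof -
  obtain DF :: "'a \<Rightarrow> 'a \<Rightarrow>\<^sub>L 'm" and D2F :: "'a \<Rightarrow> 'a \<Rightarrow>\<^sub>L 'a \<Rightarrow>\<^sub>L 'm" and UF
    where dF: "\<And>x. (F has_derivative DF x) (at x)"
    and dDF: "\<And>x. (DF has_derivative D2F x) (at x)" and lipF: "\<And>c r. \<exists>B. B-lipschitz_on (cball c r) DF"
    and "surj (DF z)" "F z = 0" "open UF" "z \<in> UF" and X_iff: "\<And>x. x \<in> UF \<Longrightarrow> x \<in> X \<longleftrightarrow> F x = 0"
    and TF: "\<And>x. tangent_space F x = {v. DF x v = 0}"
    by (fact C2_defining_mapE[OF manX])
  obtain DG :: "'a \<Rightarrow> 'a \<Rightarrow>\<^sub>L 'n" and D2G :: "'a \<Rightarrow> 'a \<Rightarrow>\<^sub>L 'a \<Rightarrow>\<^sub>L 'n" and UG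
    where dG: "\<And>x. (G has_derivative DG x) (at x)"
    and dDG: "\<And>x. (DG has_derivative D2G x) (at x)" and lipG: "\<And>c r. \<exists>B. B-lipschitz_on (cball c r) DG"
    and "surj (DG z)" "G z = 0" "open UG" "z \<in> UG" and Y_iff: "\<And>x. x \<in> UG \<Longrightarrow> x \<in> Y \<longleftrightarrow> G x = 0"
    and TG: "\<And>x. tangent_space G x = {v. DG x v = 0}"
    by (fact C2_defining_mapE[OF manY])
  obtain \<rho> where "0 < \<rho>" "cball z \<rho> \<subseteq> UF \<inter> UG"
    using open_contains_cball[of "UF \<inter> UG"] \<open>open UF\<close> \<open>open UG\<close> \<open>z \<in> UF\<close> \<open>z \<in> UG\<close> by blast
  then have near: "x \<in> X \<longleftrightarrow> F x = 0" "x \<in> Y \<longleftrightarrow> G x = 0" if "x \<in> cball z \<rho>" for x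
    using that X_iff Y_iff by blast+
  obtain e where "0 < e" "X \<inter> Y \<inter> ball z e = {z}"
    using isol by blast
  have bij: "bij (\<lambda>v. (DF z v, DG z v))"
  proof (rule bij_pair_derivative_if_transversal_isolated[OF dF dG \<open>surj (DF z)\<close> \<open>surj (DG z)\<close>])
    show "orthogonal_comp {v. DF z v = 0} \<inter> orthogonal_comp {v. DG z v = 0} = {0}"
      using transv by (simp add: normal_space_def TF TG)
    show "x = z" if "x \<in> ball z (min e \<rho>)" "F x = F z" "G x = G z" for x
    proof -
      have "x \<in> cball z \<rho>" "x \<in> ball z e"
        using that(1) by simp_all
      then have "x \<in> X \<inter> Y \<inter> ball z e"
        using near[of x] that(2,3) \<open>F z = 0\<close> \<open>G z = 0\<close> by simp
      then show ?thesis
        using \<open>X \<inter> Y \<inter> ball z e = {z}\<close> by blast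
    qed
  qed (use \<open>0 < e\<close> \<open>0 < \<rho>\<close> in simp)
  obtain BF BG where "BF-lipschitz_on (cball z \<rho>) DF" "BG-lipschitz_on (cball z \<rho>) DG"
    using lipF lipG by blast
  obtain r K where "0 < r" "r \<le> \<rho>" "0 \<le> K"
    and unique: "\<And>x. x \<in> ball z r \<Longrightarrow> F x = 0 \<Longrightarrow> \<exists>!y. y \<in> ball z r \<and> DF x (y - x) = 0 \<and> G y = 0"
    and quadratic: "\<And>x y. x \<in> ball z r \<Longrightarrow> y \<in> ball z r \<Longrightarrow> F x = 0 \<Longrightarrow> DF x (y - x) = 0 \<Longrightarrow>
      G y = 0 \<Longrightarrow> dist y z \<le> K * (dist x z)\<^sup>2"
    using unique_zero_on_kernel_coset_near[OF dF dDF dG _ _ \<open>0 < \<rho>\<close> \<open>F z = 0\<close> \<open>G z = 0\<close> bij]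
      \<open>BF-lipschitz_on (cball z \<rho>) DF\<close> \<open>BG-lipschitz_on (cball z \<rho>) DG\<close> by blast
  have on_ball: "x \<in> X \<longleftrightarrow> F x = 0" "x \<in> Y \<longleftrightarrow> G x = 0" if "x \<in> ball z r" for x
  proof -
    have "x \<in> cball z \<rho>"
      using that \<open>r \<le> \<rho>\<close> by simp
    then show "x \<in> X \<longleftrightarrow> F x = 0" "x \<in> Y \<longleftrightarrow> G x = 0"
      using near by blast+
  qed
  have affine: "y \<in> (\<lambda>v. x + v) ` tangent_space F x \<longleftrightarrow> DF x (y - x) = 0" for x y
    by (force simp: TF)
  show thesis
  proof (rule that[OF \<open>0 < r\<close> \<open>0 \<le> K\<close>])
    fix x assume x: "x \<in> X \<inter> ball z r"
    then have "F x = 0"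
      using on_ball by blast
    have "y \<in> Y \<inter> ball z r \<and> y \<in> (\<lambda>v. x + v) ` tangent_space F x \<longleftrightarrow>
        y \<in> ball z r \<and> DF x (y - x) = 0 \<and> G y = 0" for y
      using on_ball affine by blast
    then show "\<exists>!y. y \<in> Y \<inter> ball z r \<and> y \<in> (\<lambda>v. x + v) ` tangent_space F x"
      using unique[of x] x \<open>F x = 0\<close> by simp
  next
    fix x y assume "x \<in> X \<inter> ball z r" "y \<in> Y \<inter> ball z r" "y \<in> (\<lambda>v. x + v) ` tangent_space F x"
    then show "dist y z \<le> K * (dist x z)\<^sup>2"
      using quadratic[of x y] on_ball affine by blast
  qed
qed

theorem corollary3p2:
  fixes X Y :: "'a::euclidean_space set" and z :: 'a
    and F :: "'a \<Rightarrow> 'm::euclidean_space" and G :: "'a \<Rightarrow> 'n::euclidean_space"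
    and R :: "'a \<Rightarrow> 'a" and L :: real
  assumes manX: "C2_defining_map F X z"
    and manY: "C2_defining_map G Y z"
    and isol: "\<exists>e>0. X \<inter> Y \<inter> ball z e = {z}"
    and transv: "normal_space F z \<inter> normal_space G z = {0}"
    and RY: "R ` Y \<subseteq> X" and Rlip: "L-lipschitz_on Y R" and Rz: "R z = z"
  shows "\<exists>W. open W \<and> z \<in> W \<and>
           (\<forall>x \<in> X \<inter> W. \<exists>!y. y \<in> Y \<inter> W \<and> y \<in> (\<lambda>v. x + v) ` tangent_space F x) \<and>
           (let yW = (\<lambda>x. THE y. y \<in> Y \<inter> W \<and> y \<in> (\<lambda>v. x + v) ` tangent_space F x)
            in \<exists>\<delta>>0. \<exists>C. \<forall>x0 \<in> X \<inter> ball z \<delta>.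
                 let s = (\<lambda>k. ((\<lambda>x. R (yW x)) ^^ k) x0) in
                 (\<forall>k. s k \<in> X \<inter> W) \<and> s \<longlonglongrightarrow> z \<and>
                 (\<forall>k. norm (s (Suc k) - z) \<le> C * (norm (s k - z))\<^sup>2))"
proof -
  obtain r K where "0 < r" "0 \<le> K"
    and unique: "\<And>x. x \<in> X \<inter> ball z r \<Longrightarrow> \<exists>!y. y \<in> Y \<inter> ball z r \<and> y \<in> (\<lambda>v. x + v) ` tangent_space F x"
    and quadratic: "\<And>x y. x \<in> X \<inter> ball z r \<Longrightarrow> y \<in> Y \<inter> ball z r \<Longrightarrow>
      y \<in> (\<lambda>v. x + v) ` tangent_space F x \<Longrightarrow> dist y z \<le> K * (dist x z)\<^sup>2"
    using transversal_manifold_meets_tangent_translate_once[OF manX manY isol transv] by blast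
  define yW where "yW x = (THE y. y \<in> Y \<inter> ball z r \<and> y \<in> (\<lambda>v. x + v) ` tangent_space F x)" for x
  let ?T = "\<lambda>x. R (yW x)"
  have step: "?T x \<in> X \<and> dist (?T x) z \<le> L * K * (dist x z)\<^sup>2" if "x \<in> X" "x \<in> ball z r" for x
  proof -
    have y: "yW x \<in> Y \<inter> ball z r" "yW x \<in> (\<lambda>v. x + v) ` tangent_space F x"
      using theI'[OF unique] that unfolding yW_def by blast+
    have "dist (?T x) (R z) \<le> L * dist (yW x) z"
      using lipschitz_onD[OF Rlip] y manY by (simp add: C2_defining_map_def)
    also have "\<dots> \<le> L * (K * (dist x z)\<^sup>2)"
      using quadratic[of x "yW x"] that y by (intro mult_left_mono lipschitz_on_nonneg[OF Rlip]) auto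
    finally show ?thesis
      using RY y Rz by (auto simp: mult.assoc)
  qed
  obtain \<delta> where "0 < \<delta>"
    and "\<And>x0 k. x0 \<in> X \<inter> ball z \<delta> \<Longrightarrow> (?T ^^ k) x0 \<in> X \<inter> ball z r"
    and "\<And>x0. x0 \<in> X \<inter> ball z \<delta> \<Longrightarrow> (\<lambda>k. (?T ^^ k) x0) \<longlonglongrightarrow> z"
  proof (rule quadratic_convergence_of_iterates[where C="L * K" and S=X and T="?T"])
    show "0 \<le> L * K"
      using lipschitz_on_nonneg[OF Rlip] \<open>0 \<le> K\<close> by simp
  qed (use \<open>0 < r\<close> step in auto)
  with step have "\<forall>x0 \<in> X \<inter> ball z \<delta>. (\<forall>k. (?T ^^ k) x0 \<in> X \<inter> ball z r) \<and> (\<lambda>k. (?T ^^ k) x0) \<longlonglongrightarrow> z \<and>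
      (\<forall>k. norm ((?T ^^ Suc k) x0 - z) \<le> L * K * (norm ((?T ^^ k) x0 - z))\<^sup>2)"
    by (simp add: dist_norm)
  then show ?thesis
    using \<open>0 < r\<close> \<open>0 < \<delta>\<close> unique unfolding yW_def Let_def
    by (intro exI[of _ "ball z r"]) auto
qed

end
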